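(* Let $\mathbf{h}_1,\mathbf{h}_2\in\mathbb{C}^M$ be nonzero, $P>0$, and $f(\mathbf{w})=\min\{|\mathbf{h}_1^H\mathbf{w}|^2,|\mathbf{h}_2^H\mathbf{w}|^2\}$. Consider $\max_{\mathbf{w}\in\mathbb{C}^M,\ \mathbf{w}^H\mathbf{w}=P} f(\mathbf{w})$. Scenario 1: if $\mathbf{h}_1=\tau\mathbf{h}_2$ for some $\tau\in\mathbb{C}$, the maximum equals $\min\{P\|\mathbf{h}_1\|^2,P\|\mathbf{h}_2\|^2\}$, attained at $\mathbf{w}=\sqrt{P}\,\mathbf{h}_2/\|\mathbf{h}_2\|$ (equivalently, up to a unit-modulus phase, $\sqrt P\,\mathbf{h}_1/\|\mathbf{h}_1\|$). Scenario 2: if $\mathbf{h}_1,\mathbf{h}_2$ are linearly independent, with $\lambda_1,\lambda_2,\mathbf{V},\theta,\alpha,\beta,\gamma$ as in the context, the maximum is attained at $\mathbf{w}^{\rm opt}=\mathbf{V}\tilde{\mathbf{w}}^{\rm opt}$, where: (1) if $\lambda_1\le\lambda_2$: (a) for $0\le\sin\theta\le\lambda_1/\lambda_2$, the maximum is $\frac{P\lambda_1\lambda_2}{\lambda_1+\lambda_2}\frac{(1+\sin\theta)^2}{\cos^2\theta}$ with $\tilde{\mathbf{w}}^{\rm opt}=[\sqrt{\tfrac{P\lambda_2}{\lambda_1+\lambda_2}}e^{j\beta},\sqrt{\tfrac{P\lambda_1}{\lambda_1+\lambda_2}}e^{j(\beta-\alpha)},0,\dots,0]^T$; (b) for $\lambda_1/\lambda_2<\sin\theta<1$,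 the maximum is $\frac{P(\lambda_1+\lambda_2\sin^2\theta)}{\cos^2\theta}$ with $\tilde{\mathbf{w}}^{\rm opt}=[\sqrt{\tfrac{P\lambda_1}{\lambda_1+\lambda_2\sin^2\theta}}e^{j\beta},\sqrt{\tfrac{P\lambda_2\sin^2\theta}{\lambda_1+\lambda_2\sin^2\theta}}e^{j(\beta-\alpha)},0,\dots,0]^T$; (2) if $\lambda_1>\lambda_2$: (a) for $0\le\sin\theta\le\lambda_2/\lambda_1$, the maximum is $\frac{P\lambda_1\lambda_2}{\lambda_1+\lambda_2}\frac{(1+\sin\theta)^2}{\cos^2\theta}$ with $\tilde{\mathbf{w}}^{\rm opt}=[\sqrt{\tfrac{P\lambda_2}{\lambda_1+\lambda_2}}e^{j(\gamma+\alpha)},\sqrt{\tfrac{P\lambda_1}{\lambda_1+\lambda_2}}e^{j\gamma},0,\dots,0]^T$; (b) for $\lambda_2/\lambda_1<\sin\theta<1$, the maximum is $\frac{P(\lambda_1\sin^2\theta+\lambda_2)}{\cos^2\theta}$ with $\tilde{\mathbf{w}}^{\rm opt}=[\sqrt{\tfrac{P\lambda_1}{\lambda_1+\lambda_2\csc^2\theta}}e^{j(\gamma+\alpha)},\sqrt{\tfrac{P\lambda_2}{\lambda_1\sin^2\theta+\lambda_2}}e^{j\gamma},0,\dots,0]^T$.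
   Context: For linearly independent $\mathbf{h}_1,\mathbf{h}_2\in\mathbb{C}^M$, let $\mathbf{A}=\mathbf{h}_1\mathbf{h}_1^H-\mathbf{h}_2\mathbf{h}_2^H$ (rank 2), with eigendecomposition $\mathbf{A}=\mathbf{V}\boldsymbol{\Sigma}\mathbf{V}^H$, $\mathbf{V}$ unitary, $\boldsymbol{\Sigma}=\mathrm{diag}(\lambda_1,-\lambda_2,0,\dots,0)$, $\lambda_1,\lambda_2>0$. Let $\tilde{\mathbf{h}}_k=\mathbf{V}^H\mathbf{h}_k$, whose entries beyond the second vanish; write $\tilde{\mathbf{h}}_1=[\tilde h_{1,1},\tilde h_{1,2},0,\dots]^T$, $\tilde{\mathbf{h}}_2=[\tilde h_{2,1},\tilde h_{2,2},0,\dots]^T$. Define $\theta=\arccos\frac{\sqrt{\lambda_1}}{|\tilde h_{1,1}|}\in[0,\pi/2)$, $\beta=\arg\tilde h_{1,1}$, $\gamma=\arg\tilde h_{2,2}$, $\alpha=\arg\tilde h_{2,1}-\arg\tilde h_{2,2}$ (arbitrary if $\tilde h_{2,1}=0$). $j=\sqrt{-1}$. *)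

theory Defs
  imports Complex_Main "Jordan_Normal_Form.Schur_Decomposition"
begin

definition hprod :: "complex vec \<Rightarrow> complex vec \<Rightarrow> complex" where
  "hprod h w = (\<Sum>i<dim_vec h. cnj (h $ i) * w $ i)"

definition vnorm :: "complex vec \<Rightarrow> real" where
  "vnorm h = sqrt (Re (hprod h h))"

definition outer :: "complex vec \<Rightarrow> complex mat" where
  "outer h = mat (dim_vec h) (dim_vec h) (\<lambda>(i, k). h $ i * cnj (h $ k))"

definition fobj :: "complex vec \<Rightarrow> complex vec \<Rightarrow> complex vec \<Rightarrow> real" where
  "fobj h1 h2 w = min ((cmod (hprod h1 w))\<^sup>2) ((cmod (hprod h2 w))\<^sup>2)"

definition feasible :: "nat \<Rightarrow> real \<Rightarrow> complex vec \<Rightarrow> bool" where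
  "feasible M P w \<longleftrightarrow> w \<in> carrier_vec M \<and> hprod w w = complex_of_real P"

definition max_attained ::
  "nat \<Rightarrow> real \<Rightarrow> complex vec \<Rightarrow> complex vec \<Rightarrow> complex vec \<Rightarrow> real \<Rightarrow> bool" where
  "max_attained M P h1 h2 w v \<longleftrightarrow>
     feasible M P w \<and> fobj h1 h2 w = v \<and> (\<forall>u. feasible M P u \<longrightarrow> fobj h1 h2 u \<le> v)"

definition unitary_mat :: "nat \<Rightarrow> complex mat \<Rightarrow> bool" where
  "unitary_mat M V \<longleftrightarrow> V \<in> carrier_mat M M \<and>
     mat_adjoint V * V = 1\<^sub>m M \<and> V * mat_adjoint V = 1\<^sub>m M"

definition Sigma_mat :: "nat \<Rightarrow> real \<Rightarrow> real \<Rightarrow> complex mat" where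
  "Sigma_mat M l1 l2 = mat M M (\<lambda>(i, k). if i = k then
      (if i = 0 then complex_of_real l1 else if i = 1 then - complex_of_real l2 else 0) else 0)"

definition vec2 :: "nat \<Rightarrow> complex \<Rightarrow> complex \<Rightarrow> complex vec" where
  "vec2 M a b = vec M (\<lambda>i. if i = 0 then a else if i = 1 then b else 0)"

end

theory Submission
  imports Defs
begin

text \<open>Parallel channels: by Cauchy--Schwarz both gains are at most \<open>P \<parallel>h\<^sub>k\<parallel>\<^sup>2\<close>, and the
  normalised beam along either channel attains both bounds at once.

  Independent channels: the rows \<open>i \<ge> 2\<close> of \<open>\<Sigma>\<close> vanish, which forces \<open>V\<^sup>H h\<^sub>1\<close> and
  \<open>V\<^sup>H h\<^sub>2\<close> to live on the first two coordinates, so a beam \<open>V w\<close> only matters through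
  \<open>x = w\<^sub>0\<close>, \<open>y = w\<^sub>1\<close>. The remaining \<open>2 \<times> 2\<close> block of \<open>\<Sigma>\<close> fixes the moduli of the
  coefficients as \<open>\<surd>\<lambda>\<^sub>1/c, \<surd>\<lambda>\<^sub>2 s/c\<close> and \<open>\<surd>\<lambda>\<^sub>1 s/c, \<surd>\<lambda>\<^sub>2/c\<close> (\<open>s = sin \<theta>\<close>, \<open>c = cos \<theta>\<close>)
  and links their phases through \<open>\<alpha>\<close>, \<open>\<beta>\<close>, \<open>\<gamma>\<close>. With the phases of \<open>x, y\<close> aligned, both
  triangle inequalities become equalities and the problem is to maximise
  \<open>min (\<surd>\<lambda>\<^sub>1 p + \<surd>\<lambda>\<^sub>2 s q, \<surd>\<lambda>\<^sub>1 s p + \<surd>\<lambda>\<^sub>2 q)\<close> over \<open>p\<^sup>2 + q\<^sup>2 \<le> P\<close>. If the optimum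
  of one linear form alone (Cauchy--Schwarz) already makes it the smaller one, that is the
  answer (cases (b)); otherwise the optimum equalises the two forms (cases (a)).\<close>

lemma sum_mult_square_le:
  fixes a b :: "'i \<Rightarrow> real"
  shows "(\<Sum>i\<in>I. a i * b i)\<^sup>2 \<le> (\<Sum>i\<in>I. (a i)\<^sup>2) * (\<Sum>i\<in>I. (b i)\<^sup>2)"
proof -
  have sq: "(a i * b j - a j * b i)\<^sup>2
      = (a i)\<^sup>2 * (b j)\<^sup>2 + (a j)\<^sup>2 * (b i)\<^sup>2 - 2 * ((a i * b i) * (a j * b j))" for i j
    by (simp add: power2_eq_square algebra_simps)
  have "0 \<le> (\<Sum>i\<in>I. \<Sum>j\<in>I. (a i * b j - a j * b i)\<^sup>2)" by (intro sum_nonneg) auto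
  also have "\<dots> = (\<Sum>i\<in>I. \<Sum>j\<in>I. (a i)\<^sup>2 * (b j)\<^sup>2) + (\<Sum>i\<in>I. \<Sum>j\<in>I. (a j)\<^sup>2 * (b i)\<^sup>2)
      - 2 * (\<Sum>i\<in>I. \<Sum>j\<in>I. (a i * b i) * (a j * b j))"
    unfolding sq by (simp add: sum.distrib sum_subtractf sum_distrib_left)
  also have "(\<Sum>i\<in>I. \<Sum>j\<in>I. (a j)\<^sup>2 * (b i)\<^sup>2) = (\<Sum>i\<in>I. \<Sum>j\<in>I. (a i)\<^sup>2 * (b j)\<^sup>2)"
    by (rule sum.swap)
  also have "(\<Sum>i\<in>I. \<Sum>j\<in>I. (a i)\<^sup>2 * (b j)\<^sup>2) = (\<Sum>i\<in>I. (a i)\<^sup>2) * (\<Sum>i\<in>I. (b i)\<^sup>2)"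
    by (simp add: sum_product)
  also have "(\<Sum>i\<in>I. \<Sum>j\<in>I. (a i * b i) * (a j * b j)) = (\<Sum>i\<in>I. a i * b i)\<^sup>2"
    by (simp add: sum_product power2_eq_square)
  finally show ?thesis by simp
qed

lemma two_mult_square_le:
  fixes a b x y :: real
  shows "(a * x + b * y)\<^sup>2 \<le> (a\<^sup>2 + b\<^sup>2) * (x\<^sup>2 + y\<^sup>2)"
  using sum_mult_square_le[of "\<lambda>i. if i then a else b" "\<lambda>i. if i then x else y" UNIV]
  by (simp add: UNIV_bool ac_simps)

lemma sum_lessThan_eq_first_two:
  fixes f :: "nat \<Rightarrow> 'a :: comm_monoid_add"
  assumes "2 \<le> n" and "\<And>i. 2 \<le> i \<Longrightarrow> i < n \<Longrightarrow> f i = 0"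
  shows "(\<Sum>i<n. f i) = f 0 + f 1"
proof -
  have "(\<Sum>i<n. f i) = (\<Sum>i\<in>{0,1}. f i)"
    by (rule sum.mono_neutral_right) (use assms in auto)
  then show ?thesis by simp
qed

subsection \<open>The Hermitian form\<close>

lemma hprod_smult_right:
  "w \<in> carrier_vec (dim_vec h) \<Longrightarrow> hprod h (k \<cdot>\<^sub>v w) = k * hprod h w"
  unfolding hprod_def by (simp add: sum_distrib_left mult_ac)

lemma hprod_smult_left:
  "w \<in> carrier_vec (dim_vec h) \<Longrightarrow> hprod (k \<cdot>\<^sub>v h) w = cnj k * hprod h w"
  unfolding hprod_def by (simp add: sum_distrib_left mult_ac)

lemma hprod_commute:
  "w \<in> carrier_vec (dim_vec h) \<Longrightarrow> hprod w h = cnj (hprod h w)"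
  unfolding hprod_def by (simp add: mult.commute)

lemma hprod_self_eq_sum: "hprod h h = of_real (\<Sum>i<dim_vec h. (cmod (h $ i))\<^sup>2)"
  unfolding hprod_def of_real_sum by (simp add: complex_norm_square mult.commute del: of_real_power)

lemma vnorm_square: "(vnorm h)\<^sup>2 = (\<Sum>i<dim_vec h. (cmod (h $ i))\<^sup>2)"
  unfolding vnorm_def hprod_self_eq_sum by (simp add: sum_nonneg)

lemma hprod_self: "hprod h h = of_real ((vnorm h)\<^sup>2)"
  unfolding hprod_self_eq_sum vnorm_square ..

lemma vnorm_nonneg: "vnorm h \<ge> 0"
  unfolding vnorm_def hprod_self_eq_sum by (simp add: sum_nonneg)

lemma vnorm_pos:
  assumes "h \<in> carrier_vec n" and "h \<noteq> 0\<^sub>v n"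
  shows "vnorm h > 0"
proof -
  obtain i where i: "i < n" "h $ i \<noteq> 0"
    using assms by (metis eq_vecI carrier_vecD index_zero_vec(1,2))
  have "0 < (cmod (h $ i))\<^sup>2" using i by simp
  also have "\<dots> \<le> (vnorm h)\<^sup>2"
    unfolding vnorm_square using i assms(1) by (intro member_le_sum) auto
  finally show ?thesis using vnorm_nonneg[of h] by (simp add: less_le)
qed

lemma vnorm_smult: "vnorm (k \<cdot>\<^sub>v h) = cmod k * vnorm h"
proof -
  have "(vnorm (k \<cdot>\<^sub>v h))\<^sup>2 = (cmod k * vnorm h)\<^sup>2"
    by (simp add: vnorm_square norm_mult power_mult_distrib sum_distrib_left)
  then show ?thesis using vnorm_nonneg by (simp add: power2_eq_iff_nonneg)
qed

lemma hprod_Cauchy_Schwarz: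
  assumes "h \<in> carrier_vec n" and "u \<in> carrier_vec n"
  shows "cmod (hprod h u) \<le> vnorm h * vnorm u"
proof -
  have "cmod (hprod h u) \<le> (\<Sum>i<n. cmod (h $ i) * cmod (u $ i))"
    using assms unfolding hprod_def by (auto intro: order_trans[OF norm_sum] simp: norm_mult)
  moreover have "(\<Sum>i<n. cmod (h $ i) * cmod (u $ i))\<^sup>2 \<le> (vnorm h * vnorm u)\<^sup>2"
    using sum_mult_square_le[of "\<lambda>i. cmod (h $ i)" "\<lambda>i. cmod (u $ i)" "{..<n}"] assms
    by (simp add: power_mult_distrib vnorm_square)
  ultimately show ?thesis
    using vnorm_nonneg[of h] vnorm_nonneg[of u] by (meson order_trans power2_le_imp_le mult_nonneg_nonneg)
qed

lemma feasible_vnorm: "feasible M P u \<Longrightarrow> (vnorm u)\<^sup>2 = P"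
  unfolding feasible_def hprod_self of_real_eq_iff by simp

subsection \<open>Parallel channels\<close>

lemma cmod_hprod_parallel:
  assumes "h \<in> carrier_vec n" and "g = \<tau> \<cdot>\<^sub>v h"
  shows "cmod (hprod g h) = vnorm g * vnorm h" and "cmod (hprod h g) = vnorm g * vnorm h"
proof -
  have "hprod g h = cnj \<tau> * of_real ((vnorm h)\<^sup>2)"
    using assms by (simp add: hprod_smult_left hprod_self)
  then show gh: "cmod (hprod g h) = vnorm g * vnorm h"
    using assms(2) by (simp add: norm_mult vnorm_smult power2_eq_square)
  show "cmod (hprod h g) = vnorm g * vnorm h"
    using assms gh hprod_commute[of h g] by simp
qed

lemma feasible_normalised:
  assumes "h \<in> carrier_vec M" and "h \<noteq> 0\<^sub>v M" and "P > 0"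
  shows "feasible M P (of_real (sqrt P / vnorm h) \<cdot>\<^sub>v h)"
proof -
  have "vnorm h > 0" using vnorm_pos assms by blast
  then have "(vnorm (of_real (sqrt P / vnorm h) \<cdot>\<^sub>v h))\<^sup>2 = P"
    using assms(3) by (simp add: vnorm_smult norm_divide power_mult_distrib power_divide)
  then show ?thesis using assms(1) unfolding feasible_def hprod_self by simp
qed

lemma cmod_hprod_normalised:
  assumes "g \<in> carrier_vec M" and "h \<in> carrier_vec M" and "P \<ge> 0"
  shows "cmod (hprod g (of_real (sqrt P / vnorm h) \<cdot>\<^sub>v h)) = sqrt P * cmod (hprod g h) / vnorm h"
  using assms vnorm_nonneg[of h] by (simp add: hprod_smult_right norm_mult norm_divide)

lemma max_attained_Cauchy_Schwarz_tight:
  assumes "h1 \<in> carrier_vec M" and "h2 \<in> carrier_vec M" and "feasible M P w"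
    and "cmod (hprod h1 w) = sqrt P * vnorm h1" and "cmod (hprod h2 w) = sqrt P * vnorm h2"
  shows "max_attained M P h1 h2 w (min (P * (vnorm h1)\<^sup>2) (P * (vnorm h2)\<^sup>2))"
proof -
  have P: "P \<ge> 0" using feasible_vnorm[OF assms(3)] by auto
  have bound: "(cmod (hprod h u))\<^sup>2 \<le> P * (vnorm h)\<^sup>2"
    if "h \<in> carrier_vec M" and "feasible M P u" for h u
  proof -
    have "cmod (hprod h u) \<le> vnorm h * vnorm u"
      using that hprod_Cauchy_Schwarz unfolding feasible_def by blast
    then have "(cmod (hprod h u))\<^sup>2 \<le> (vnorm h * vnorm u)\<^sup>2"
      by (rule power_mono) simp
    then show ?thesis using feasible_vnorm[OF that(2)] by (simp add: power_mult_distrib mult.commute)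
  qed
  show ?thesis
    unfolding max_attained_def fobj_def
  proof (intro conjI allI impI)
    show "feasible M P w" by fact
    show "min ((cmod (hprod h1 w))\<^sup>2) ((cmod (hprod h2 w))\<^sup>2) = min (P * (vnorm h1)\<^sup>2) (P * (vnorm h2)\<^sup>2)"
      using assms(4,5) P by (simp add: power_mult_distrib)
    fix u assume "feasible M P u"
    then show "min ((cmod (hprod h1 u))\<^sup>2) ((cmod (hprod h2 u))\<^sup>2) \<le> min (P * (vnorm h1)\<^sup>2) (P * (vnorm h2)\<^sup>2)"
      using bound assms(1,2) by (intro min.mono)
  qed
qed

lemma max_attained_parallel:
  assumes h1: "h1 \<in> carrier_vec M" and h2: "h2 \<in> carrier_vec M"
    and n1: "h1 \<noteq> 0\<^sub>v M" and n2: "h2 \<noteq> 0\<^sub>v M" and P: "P > 0" and \<tau>: "h1 = \<tau> \<cdot>\<^sub>v h2"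
  shows "max_attained M P h1 h2 (of_real (sqrt P / vnorm h2) \<cdot>\<^sub>v h2)
           (min (P * (vnorm h1)\<^sup>2) (P * (vnorm h2)\<^sup>2))"
    and "max_attained M P h1 h2 (of_real (sqrt P / vnorm h1) \<cdot>\<^sub>v h1)
           (min (P * (vnorm h1)\<^sup>2) (P * (vnorm h2)\<^sup>2))"
proof -
  have v: "vnorm h1 > 0" "vnorm h2 > 0" using vnorm_pos h1 h2 n1 n2 by blast+
  have tight: "cmod (hprod g (of_real (sqrt P / vnorm h) \<cdot>\<^sub>v h)) = sqrt P * vnorm g"
    if "g \<in> carrier_vec M" "h \<in> carrier_vec M" "vnorm h > 0"
      and "cmod (hprod g h) = vnorm g * vnorm h" for g h
    using that P by (subst cmod_hprod_normalised) auto
  have self: "cmod (hprod h h) = vnorm h * vnorm h" for h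
    by (simp add: hprod_self norm_mult vnorm_nonneg power2_eq_square)
  note parallel = cmod_hprod_parallel[OF h2 \<tau>]
  show "max_attained M P h1 h2 (of_real (sqrt P / vnorm h2) \<cdot>\<^sub>v h2)
          (min (P * (vnorm h1)\<^sup>2) (P * (vnorm h2)\<^sup>2))"
    by (intro max_attained_Cauchy_Schwarz_tight feasible_normalised tight)
       (use h1 h2 n1 n2 P v self parallel in simp_all)
  show "max_attained M P h1 h2 (of_real (sqrt P / vnorm h1) \<cdot>\<^sub>v h1)
          (min (P * (vnorm h1)\<^sup>2) (P * (vnorm h2)\<^sup>2))"
    by (intro max_attained_Cauchy_Schwarz_tight feasible_normalised tight)
       (use h1 h2 n1 n2 P v self parallel in simp_all)
qed

subsection \<open>The reduced real problem\<close>

text \<open>For aligned phases the two gains of the reduced problem are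
  \<open>min_gain \<surd>\<lambda>\<^sub>1 \<surd>\<lambda>\<^sub>2 s \<bar>x\<bar> \<bar>y\<bar> / c\<close>, see \<open>F_aligned\<close> below.\<close>

definition min_gain :: "real \<Rightarrow> real \<Rightarrow> real \<Rightarrow> real \<Rightarrow> real \<Rightarrow> real" where
  "min_gain A B s p q = min (A * p + B * s * q) (A * s * p + B * q)"

lemma min_gain_swap: "min_gain A B s p q = min_gain B A s q p"
  unfolding min_gain_def by (simp add: min.commute ac_simps)

lemma min_gain_nonneg: "A \<ge> 0 \<Longrightarrow> B \<ge> 0 \<Longrightarrow> s \<ge> 0 \<Longrightarrow> p \<ge> 0 \<Longrightarrow> q \<ge> 0 \<Longrightarrow> min_gain A B s p q \<ge> 0"
  unfolding min_gain_def by simp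

lemma min_gain_le_first:
  assumes "p\<^sup>2 + q\<^sup>2 \<le> P"
  shows "min_gain A B s p q \<le> sqrt (P * (A\<^sup>2 + B\<^sup>2 * s\<^sup>2))"
proof -
  have "(A * p + (B * s) * q)\<^sup>2 \<le> (A\<^sup>2 + (B * s)\<^sup>2) * (p\<^sup>2 + q\<^sup>2)"
    by (rule two_mult_square_le)
  also have "\<dots> \<le> P * (A\<^sup>2 + B\<^sup>2 * s\<^sup>2)"
    using mult_right_mono[OF assms, of "A\<^sup>2 + B\<^sup>2 * s\<^sup>2"] by (simp add: power_mult_distrib mult.commute)
  finally have "A * p + B * s * q \<le> sqrt (P * (A\<^sup>2 + B\<^sup>2 * s\<^sup>2))"
    by (simp add: real_le_rsqrt mult.assoc)
  then show ?thesis unfolding min_gain_def by simp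
qed

text \<open>The bound is attained when the first gain is the smaller one, i.e.\ when \<open>A\<^sup>2 \<le> s B\<^sup>2\<close>:
  the second gain exceeds the first by \<open>(1 - s) (s B\<^sup>2 - A\<^sup>2) r\<close>.\<close>

lemma min_gain_first_witness:
  assumes "r \<ge> 0" and "0 \<le> s" and "s \<le> 1" and "A\<^sup>2 \<le> s * B\<^sup>2"
  shows "min_gain A B s (A * r) (B * s * r) = (A\<^sup>2 + B\<^sup>2 * s\<^sup>2) * r"
proof -
  have "(A\<^sup>2 + B\<^sup>2 * s\<^sup>2) * r \<le> s * (A\<^sup>2 + B\<^sup>2) * r"
  proof (rule mult_right_mono)
    have "0 \<le> (1 - s) * (s * B\<^sup>2 - A\<^sup>2)" using assms by simp
    then show "A\<^sup>2 + B\<^sup>2 * s\<^sup>2 \<le> s * (A\<^sup>2 + B\<^sup>2)" by (simp add: algebra_simps power2_eq_square)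
  qed (fact \<open>r \<ge> 0\<close>)
  then show ?thesis
    unfolding min_gain_def by (simp add: min_def algebra_simps power2_eq_square)
qed

text \<open>The weights \<open>B\<^sup>2 - s A\<^sup>2\<close> and \<open>A\<^sup>2 - s B\<^sup>2\<close> combine the two gains into
  \<open>(1 - s\<^sup>2) A B (B p + A q)\<close>, which Cauchy--Schwarz bounds.\<close>

lemma min_gain_le_balanced:
  assumes A: "A > 0" and B: "B > 0" and s: "0 \<le> s" "s < 1"
    and "s * B\<^sup>2 \<le> A\<^sup>2" and "s * A\<^sup>2 \<le> B\<^sup>2"
    and "p \<ge> 0" and "q \<ge> 0" and pq: "p\<^sup>2 + q\<^sup>2 \<le> P"
  shows "min_gain A B s p q \<le> (1 + s) * A * B * sqrt (P / (A\<^sup>2 + B\<^sup>2))"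
proof -
  define n where "n = min_gain A B s p q"
  define N where "N = A\<^sup>2 + B\<^sup>2"
  have N: "N > 0" using A by (simp add: N_def add_pos_nonneg)
  have P: "P \<ge> 0" using pq by (metis add_nonneg_nonneg order_trans zero_le_power2)
  have "(1 - s) * (N * n) = (B\<^sup>2 - s * A\<^sup>2) * n + (A\<^sup>2 - s * B\<^sup>2) * n"
    by (simp add: N_def algebra_simps)
  also have "\<dots> \<le> (B\<^sup>2 - s * A\<^sup>2) * (A * p + B * s * q) + (A\<^sup>2 - s * B\<^sup>2) * (A * s * p + B * q)"
    using assms by (intro add_mono mult_left_mono) (simp_all add: n_def min_gain_def)
  also have "\<dots> = (1 - s) * ((1 + s) * A * B * (B * p + A * q))"
    by (simp add: algebra_simps power2_eq_square)
  finally have "N * n \<le> (1 + s) * A * B * (B * p + A * q)"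
    using s by simp
  moreover have "B * p + A * q \<le> N * sqrt (P / N)"
  proof -
    have "(B * p + A * q)\<^sup>2 \<le> (B\<^sup>2 + A\<^sup>2) * (p\<^sup>2 + q\<^sup>2)" by (rule two_mult_square_le)
    also have "\<dots> \<le> N * P" using pq N by (simp add: N_def add.commute)
    also have "N * P = N\<^sup>2 * (P / N)"
      using N by (simp add: power2_eq_square)
    also have "\<dots> = (N * sqrt (P / N))\<^sup>2"
      using N P by (simp add: power_mult_distrib)
    finally show ?thesis by (rule power2_le_imp_le) (use N P in simp)
  qed
  moreover have "0 \<le> (1 + s) * A * B" using A B s by simp
  ultimately have "N * n \<le> N * ((1 + s) * A * B * sqrt (P / N))"
    by (metis mult_left_mono order_trans mult.left_commute)
  then show ?thesis using N by (simp add: n_def N_def)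
qed

lemma min_gain_balanced_witness: "min_gain A B s (B * r) (A * r) = (1 + s) * A * B * r"
  unfolding min_gain_def by (simp add: algebra_simps)

subsection \<open>The reduced complex problem\<close>

lemma min_power2: "0 \<le> a \<Longrightarrow> 0 \<le> b \<Longrightarrow> min (a\<^sup>2) (b\<^sup>2) = (min a b)\<^sup>2" for a b :: real
  by (auto simp: min_def power_mono)

lemma cis_cnj_mult: "cnj (cis t) * cis \<phi> = cis (\<phi> - t)"
  by (simp add: cis_cnj cis_mult)

lemma cmod_cnj_mult_cis_add:
  assumes "u = of_real r1 * cis t1" and "v = of_real r2 * cis t2" and "\<phi>1 - \<phi>2 = t1 - t2"
    and "r1 \<ge> 0" and "r2 \<ge> 0" and "X \<ge> 0" and "Y \<ge> 0"
  shows "cmod (cnj u * (of_real X * cis \<phi>1) + cnj v * (of_real Y * cis \<phi>2)) = r1 * X + r2 * Y"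
proof -
  have phase: "\<phi>2 - t2 = \<phi>1 - t1" using assms(3) by simp
  have "cnj u * (of_real X * cis \<phi>1) = of_real (r1 * X) * cis (\<phi>1 - t1)"
    unfolding assms(1) by (simp add: cis_cnj_mult[symmetric] mult_ac)
  moreover have "cnj v * (of_real Y * cis \<phi>2) = of_real (r2 * Y) * cis (\<phi>1 - t1)"
    unfolding assms(2) phase[symmetric] by (simp add: cis_cnj_mult[symmetric] mult_ac)
  ultimately have eq: "cnj u * (of_real X * cis \<phi>1) + cnj v * (of_real Y * cis \<phi>2)
      = of_real (r1 * X + r2 * Y) * cis (\<phi>1 - t1)"
    by (simp only: of_real_add distrib_right)
  show ?thesis unfolding eq norm_mult norm_of_real norm_cis using assms(4-) by simp
qed

lemma polar_form: "z = of_real (cmod z) * cis (Arg z)"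
  by (metis rcis_cmod_Arg rcis_def)

text \<open>\<open>h11, h12\<close> and \<open>h21, h22\<close> are the two leading coordinates of \<open>V\<^sup>H h\<^sub>1\<close> and \<open>V\<^sup>H h\<^sub>2\<close>; the
  hypotheses are the leading \<open>2 \<times> 2\<close> block of \<open>V\<^sup>H (h\<^sub>1 h\<^sub>1\<^sup>H - h\<^sub>2 h\<^sub>2\<^sup>H) V = \<Sigma>\<close>.\<close>

locale diagonalised_pair =
  fixes h11 h12 h21 h22 :: complex and l1 l2 \<alpha> :: real
  assumes l1_pos: "l1 > 0" and l2_pos: "l2 > 0"
    and gram_11: "h11 * cnj h11 - h21 * cnj h21 = of_real l1"
    and gram_22: "h12 * cnj h12 - h22 * cnj h22 = - of_real l2"
    and gram_12: "h11 * cnj h12 - h21 * cnj h22 = 0"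
    and alpha: "h21 \<noteq> 0 \<Longrightarrow> \<alpha> = Arg h21 - Arg h22"
begin

definition c :: real where "c = cos (arccos (sqrt l1 / cmod h11))"
definition s :: real where "s = sin (arccos (sqrt l1 / cmod h11))"

definition F :: "complex \<Rightarrow> complex \<Rightarrow> real" where
  "F x y = min ((cmod (cnj h11 * x + cnj h12 * y))\<^sup>2) ((cmod (cnj h21 * x + cnj h22 * y))\<^sup>2)"

definition is_max :: "real \<Rightarrow> complex \<Rightarrow> complex \<Rightarrow> real \<Rightarrow> bool" where
  "is_max P x y v \<longleftrightarrow> (cmod x)\<^sup>2 + (cmod y)\<^sup>2 = P \<and> F x y = v
     \<and> (\<forall>x' y'. (cmod x')\<^sup>2 + (cmod y')\<^sup>2 \<le> P \<longrightarrow> F x' y' \<le> v)"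

lemma moduli_gram:
  "(cmod h11)\<^sup>2 - (cmod h21)\<^sup>2 = l1" "(cmod h22)\<^sup>2 - (cmod h12)\<^sup>2 = l2"
  "cmod h11 * cmod h12 = cmod h21 * cmod h22"
proof -
  have "of_real ((cmod h11)\<^sup>2 - (cmod h21)\<^sup>2) = (of_real l1 :: complex)"
    using gram_11 by (simp only: of_real_diff complex_norm_square)
  then show "(cmod h11)\<^sup>2 - (cmod h21)\<^sup>2 = l1" by (rule of_real_eq_iff[THEN iffD1])
  have "of_real ((cmod h22)\<^sup>2 - (cmod h12)\<^sup>2) = (of_real l2 :: complex)"
    using gram_22 by (simp only: of_real_diff complex_norm_square) (simp add: algebra_simps)
  then show "(cmod h22)\<^sup>2 - (cmod h12)\<^sup>2 = l2" by (rule of_real_eq_iff[THEN iffD1])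
  have "cmod (h11 * cnj h12) = cmod (h21 * cnj h22)" using gram_12 by simp
  then show "cmod h11 * cmod h12 = cmod h21 * cmod h22" by (simp add: norm_mult)
qed

lemma cmod_h11_ge: "sqrt l1 \<le> cmod h11"
  using moduli_gram(1) zero_le_power2[of "cmod h21"] by (intro real_le_lsqrt) auto

lemma cmod_h11_pos: "cmod h11 > 0"
  using cmod_h11_ge l1_pos by (meson less_le_trans real_sqrt_gt_zero)

lemma cos_sin_theta: "c = sqrt l1 / cmod h11" "c > 0" "0 \<le> s" "s < 1" "s\<^sup>2 + c\<^sup>2 = 1"
proof -
  have pos: "0 < sqrt l1 / cmod h11" and le1: "sqrt l1 / cmod h11 \<le> 1"
    using cmod_h11_ge cmod_h11_pos l1_pos by auto
  show c: "c = sqrt l1 / cmod h11" unfolding c_def using pos le1 by (simp add: cos_arccos)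
  have s: "s = sqrt (1 - c\<^sup>2)" unfolding s_def c using pos le1 by (simp add: sin_arccos)
  show "c > 0" using c pos by simp
  have "c\<^sup>2 \<le> 1" using c pos le1 by (simp add: power_le_one)
  then show "0 \<le> s" "s < 1" "s\<^sup>2 + c\<^sup>2 = 1" using s \<open>c > 0\<close> by (auto simp: real_sqrt_lt_1_iff)
qed

lemma s_le_ratio: "l1 \<le> l2 \<Longrightarrow> s \<le> l2 / l1" "l2 < l1 \<Longrightarrow> s \<le> l1 / l2"
proof -
  have "s * l1 < l1" "s * l2 < l2"
    using mult_strict_right_mono[OF cos_sin_theta(4)] l1_pos l2_pos by auto
  then show "l1 \<le> l2 \<Longrightarrow> s \<le> l2 / l1" "l2 < l1 \<Longrightarrow> s \<le> l1 / l2"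
    by (simp_all only: pos_le_divide_eq[OF l1_pos] pos_le_divide_eq[OF l2_pos])
qed

lemma moduli:
  "cmod h11 = sqrt l1 / c" "cmod h21 = sqrt l1 * s / c"
  "cmod h22 = sqrt l2 / c" "cmod h12 = sqrt l2 * s / c"
proof -
  have c: "c > 0" "c \<noteq> 0" and s2: "s\<^sup>2 = 1 - c\<^sup>2" using cos_sin_theta by auto
  show h11_eq: "cmod h11 = sqrt l1 / c" unfolding cos_sin_theta(1) using l1_pos by simp
  have "(cmod h21)\<^sup>2 = (sqrt l1 * s / c)\<^sup>2"
    using moduli_gram(1) l1_pos c
    by (simp add: h11_eq power_divide power_mult_distrib s2 field_simps)
  then show h21_eq: "cmod h21 = sqrt l1 * s / c"
    using cos_sin_theta(3) c l1_pos by (simp add: power2_eq_iff_nonneg)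
  have h12_eq: "cmod h12 = s * cmod h22"
    using moduli_gram(3) c l1_pos unfolding h11_eq h21_eq by (simp add: field_simps)
  have "(cmod h22)\<^sup>2 = (sqrt l2 / c)\<^sup>2"
    using moduli_gram(2) l2_pos c unfolding h12_eq
    by (simp add: power_divide power_mult_distrib s2 field_simps)
  then show h22_eq: "cmod h22 = sqrt l2 / c"
    using c l2_pos by (simp add: power2_eq_iff_nonneg)
  show "cmod h12 = sqrt l2 * s / c" using h12_eq h22_eq by simp
qed

lemma h21_polar: "h21 = of_real (cmod h21) * cis (Arg h22 + \<alpha>)"
proof (cases "h21 = 0")
  case False
  then show ?thesis using alpha polar_form[of h21] by simp
qed simp

lemma h12_polar: "h12 = of_real (cmod h12) * cis (Arg h11 - \<alpha>)"
proof (cases "h12 = 0")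
  case False
  have h11: "h11 \<noteq> 0" using cmod_h11_pos by auto
  then have "h21 \<noteq> 0" using gram_12 False by auto
  then have arg: "Arg h21 = Arg h22 + \<alpha>" using alpha by simp
  have "cnj h12 = h21 * cnj h22 / h11" using gram_12 h11 by (simp add: field_simps)
  also have "\<dots> = rcis (cmod h21) (Arg h22 + \<alpha>) * rcis (cmod h22) (- Arg h22) / rcis (cmod h11) (Arg h11)"
    by (simp only: rcis_cmod_Arg rcis_cnj arg[symmetric])
  also have "\<dots> = rcis (cmod h21 * cmod h22 / cmod h11) (\<alpha> - Arg h11)"
    by (simp only: rcis_mult rcis_divide) simp
  also have "cmod h21 * cmod h22 / cmod h11 = cmod h12"
    using moduli_gram(3) h11 by (simp add: field_simps)
  finally have "h12 = cnj (rcis (cmod h12) (\<alpha> - Arg h11))" by (metis complex_cnj_cnj)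
  then show ?thesis by (simp add: rcis_def cis_cnj)
qed simp

text \<open>Rows \<open>i \<ge> 2\<close> of \<open>\<Sigma>\<close> vanish; this forces the corresponding coordinates of
  \<open>V\<^sup>H h\<^sub>1\<close> and \<open>V\<^sup>H h\<^sub>2\<close> to vanish, because the leading block is invertible.\<close>

lemma orthogonal_to_leading_block:
  assumes t1: "t * cnj h11 - u * cnj h21 = 0" and t2: "t * cnj h12 - u * cnj h22 = 0"
  shows "t = 0 \<and> u = 0"
proof -
  have h11: "h11 \<noteq> 0" using cmod_h11_pos by auto
  have det: "h11 * h22 - h21 * h12 \<noteq> 0"
  proof
    assume det0: "h11 * h22 - h21 * h12 = 0"
    have "cnj h12 * of_real l1 = cnj h11 * (h11 * cnj h12 - h21 * cnj h22) + h21 * cnj (h11 * h22 - h21 * h12)"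
      unfolding gram_11[symmetric] by (simp add: algebra_simps)
    then have "h12 = 0" using gram_12 det0 l1_pos by simp
    then have "h22 = 0" using det0 h11 by simp
    then show False using gram_22 \<open>h12 = 0\<close> l2_pos by simp
  qed
  have "u * cnj (h21 * h12 - h11 * h22) = cnj h11 * (t * cnj h12 - u * cnj h22) - cnj h12 * (t * cnj h11 - u * cnj h21)"
    by (simp add: algebra_simps)
  moreover have "cnj (h21 * h12 - h11 * h22) \<noteq> 0"
    using det by (metis complex_cnj_zero_iff eq_iff_diff_eq_0)
  ultimately have "u = 0" using t1 t2 by simp
  then show ?thesis using t1 h11 by simp
qed

lemma F_le: "F x y \<le> (min_gain (sqrt l1) (sqrt l2) s (cmod x) (cmod y) / c)\<^sup>2"
proof -
  have c: "c > 0" by (rule cos_sin_theta)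
  have "cmod (cnj h11 * x + cnj h12 * y) \<le> (sqrt l1 * cmod x + sqrt l2 * s * cmod y) / c"
    using norm_triangle_ineq[of "cnj h11 * x" "cnj h12 * y"] by (simp add: norm_mult moduli add_divide_distrib)
  moreover have "cmod (cnj h21 * x + cnj h22 * y) \<le> (sqrt l1 * s * cmod x + sqrt l2 * cmod y) / c"
    using norm_triangle_ineq[of "cnj h21 * x" "cnj h22 * y"] by (simp add: norm_mult moduli add_divide_distrib)
  ultimately have "min (cmod (cnj h11 * x + cnj h12 * y)) (cmod (cnj h21 * x + cnj h22 * y))
      \<le> min_gain (sqrt l1) (sqrt l2) s (cmod x) (cmod y) / c"
    using c by (auto simp: min_gain_def min_divide_distrib_right intro: min.coboundedI1 min.coboundedI2)
  then show ?thesis unfolding F_def by (simp add: min_power2 power_mono)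
qed

lemma F_aligned:
  assumes "X \<ge> 0" and "Y \<ge> 0" and "\<phi> - \<psi> = \<alpha>"
  shows "F (of_real X * cis \<phi>) (of_real Y * cis \<psi>) = (min_gain (sqrt l1) (sqrt l2) s X Y / c)\<^sup>2"
proof -
  have c: "c > 0" and s: "s \<ge> 0" using cos_sin_theta by auto
  have "cmod (cnj h11 * (of_real X * cis \<phi>) + cnj h12 * (of_real Y * cis \<psi>)) = cmod h11 * X + cmod h12 * Y"
    by (rule cmod_cnj_mult_cis_add[OF polar_form h12_polar]) (use assms in auto)
  moreover have "cmod (cnj h21 * (of_real X * cis \<phi>) + cnj h22 * (of_real Y * cis \<psi>)) = cmod h21 * X + cmod h22 * Y"
    by (rule cmod_cnj_mult_cis_add[OF h21_polar polar_form]) (use assms in auto)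
  ultimately have "F (of_real X * cis \<phi>) (of_real Y * cis \<psi>)
      = min (((sqrt l1 * X + sqrt l2 * s * Y) / c)\<^sup>2) (((sqrt l1 * s * X + sqrt l2 * Y) / c)\<^sup>2)"
    unfolding F_def by (simp add: moduli add_divide_distrib)
  also have "\<dots> = (min_gain (sqrt l1) (sqrt l2) s X Y / c)\<^sup>2"
    using assms c s l1_pos l2_pos by (simp add: min_gain_def min_power2 min_divide_distrib_right)
  finally show ?thesis .
qed

text \<open>Aligning the phases of the two coordinates makes both triangle inequalities in \<open>F_le\<close> equalities,
  so the complex problem reduces to maximising \<open>min_gain\<close> over the quarter disc.\<close>

lemma is_max_aligned:
  assumes "X \<ge> 0" and "Y \<ge> 0" and "X\<^sup>2 + Y\<^sup>2 = P" and "\<phi> - \<psi> = \<alpha>"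
    and "min_gain (sqrt l1) (sqrt l2) s X Y = g"
    and "\<And>p q. p \<ge> 0 \<Longrightarrow> q \<ge> 0 \<Longrightarrow> p\<^sup>2 + q\<^sup>2 \<le> P \<Longrightarrow> min_gain (sqrt l1) (sqrt l2) s p q \<le> g"
  shows "is_max P (of_real X * cis \<phi>) (of_real Y * cis \<psi>) ((g / c)\<^sup>2)"
  unfolding is_max_def
proof (intro conjI allI impI)
  have c: "c > 0" and s: "s \<ge> 0" using cos_sin_theta by auto
  show "(cmod (of_real X * cis \<phi>))\<^sup>2 + (cmod (of_real Y * cis \<psi>))\<^sup>2 = P"
    using assms by (simp add: norm_mult)
  show "F (of_real X * cis \<phi>) (of_real Y * cis \<psi>) = (g / c)\<^sup>2"
    using F_aligned assms by simp
  fix x y :: complex assume "(cmod x)\<^sup>2 + (cmod y)\<^sup>2 \<le> P"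
  then have "min_gain (sqrt l1) (sqrt l2) s (cmod x) (cmod y) / c \<le> g / c"
    using assms(6) c by (simp add: divide_right_mono)
  then have "(min_gain (sqrt l1) (sqrt l2) s (cmod x) (cmod y) / c)\<^sup>2 \<le> (g / c)\<^sup>2"
    using c s l1_pos l2_pos by (intro power_mono) (simp_all add: min_gain_nonneg)
  then show "F x y \<le> (g / c)\<^sup>2" using F_le order_trans by blast
qed

lemma is_max_balanced:
  assumes "P > 0" and "s \<le> l1 / l2" and "s \<le> l2 / l1" and "\<phi> - \<psi> = \<alpha>"
  shows "is_max P (of_real (sqrt (P * l2 / (l1 + l2))) * cis \<phi>) (of_real (sqrt (P * l1 / (l1 + l2))) * cis \<psi>)
           (P * l1 * l2 / (l1 + l2) * (1 + s)\<^sup>2 / c\<^sup>2)"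
proof -
  define r where "r = sqrt (P / (l1 + l2))"
  have L: "l1 + l2 > 0" using l1_pos l2_pos by simp
  have X: "sqrt (P * l2 / (l1 + l2)) = sqrt l2 * r" and Y: "sqrt (P * l1 / (l1 + l2)) = sqrt l1 * r"
    by (simp_all add: r_def flip: real_sqrt_mult)
  have "is_max P (of_real (sqrt l2 * r) * cis \<phi>) (of_real (sqrt l1 * r) * cis \<psi>)
          (((1 + s) * sqrt l1 * sqrt l2 * r / c)\<^sup>2)"
  proof (rule is_max_aligned)
    have "(sqrt l2 * r)\<^sup>2 + (sqrt l1 * r)\<^sup>2 = (l1 + l2) * (P / (l1 + l2))"
      using assms(1) l1_pos l2_pos by (simp add: r_def power_mult_distrib algebra_simps add_divide_distrib)
    then show "(sqrt l2 * r)\<^sup>2 + (sqrt l1 * r)\<^sup>2 = P" using L by simp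
    fix p q :: real assume "p \<ge> 0" "q \<ge> 0" "p\<^sup>2 + q\<^sup>2 \<le> P"
    then show "min_gain (sqrt l1) (sqrt l2) s p q \<le> (1 + s) * sqrt l1 * sqrt l2 * r"
      using min_gain_le_balanced[of "sqrt l1" "sqrt l2" s] assms l1_pos l2_pos cos_sin_theta
      by (simp add: r_def pos_le_divide_eq mult.commute)
  qed (use assms l1_pos l2_pos in \<open>simp_all add: r_def min_gain_balanced_witness\<close>)
  moreover have "((1 + s) * sqrt l1 * sqrt l2 * r / c)\<^sup>2 = P * l1 * l2 / (l1 + l2) * (1 + s)\<^sup>2 / c\<^sup>2"
    using assms(1) L l1_pos l2_pos by (simp add: r_def power_mult_distrib power_divide)
  ultimately show ?thesis unfolding X Y by simp
qed

lemma is_max_first: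
  assumes "P > 0" and "l1 / l2 < s" and "\<phi> - \<psi> = \<alpha>"
  shows "is_max P (of_real (sqrt (P * l1 / (l1 + l2 * s\<^sup>2))) * cis \<phi>)
           (of_real (sqrt (P * l2 * s\<^sup>2 / (l1 + l2 * s\<^sup>2))) * cis \<psi>) (P * (l1 + l2 * s\<^sup>2) / c\<^sup>2)"
proof -
  define D where "D = l1 + l2 * s\<^sup>2"
  define r where "r = sqrt (P / D)"
  have D: "D > 0" using l1_pos l2_pos by (simp add: D_def add_pos_nonneg)
  have r: "r \<ge> 0" using D assms(1) by (simp add: r_def)
  have s: "0 \<le> s" "s < 1" using cos_sin_theta by auto
  have X: "sqrt (P * l1 / D) = sqrt l1 * r"
    by (simp add: r_def real_sqrt_mult[symmetric] ac_simps)
  have "sqrt (P * l2 * s\<^sup>2 / D) = sqrt (l2 * s\<^sup>2 * (P / D))" by (simp add: ac_simps)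
  also have "\<dots> = sqrt l2 * s * r" unfolding real_sqrt_mult r_def using s by simp
  finally have Y: "sqrt (P * l2 * s\<^sup>2 / D) = sqrt l2 * s * r" .
  have Dr: "D * r = sqrt (P * D)"
    using D assms(1) by (simp add: r_def real_sqrt_divide real_sqrt_mult field_simps)
  have "is_max P (of_real (sqrt l1 * r) * cis \<phi>) (of_real (sqrt l2 * s * r) * cis \<psi>) ((D * r / c)\<^sup>2)"
  proof (rule is_max_aligned)
    have "min_gain (sqrt l1) (sqrt l2) s (sqrt l1 * r) (sqrt l2 * s * r)
        = ((sqrt l1)\<^sup>2 + (sqrt l2)\<^sup>2 * s\<^sup>2) * r"
      by (rule min_gain_first_witness)
         (use r s assms(2) l1_pos l2_pos in \<open>simp_all add: divide_less_eq mult.commute\<close>)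
    then show "min_gain (sqrt l1) (sqrt l2) s (sqrt l1 * r) (sqrt l2 * s * r) = D * r"
      using l1_pos l2_pos by (simp add: D_def)
    have "(sqrt l1 * r)\<^sup>2 + (sqrt l2 * s * r)\<^sup>2 = D * (P / D)"
      using assms(1) l1_pos l2_pos by (simp add: r_def D_def power_mult_distrib algebra_simps add_divide_distrib)
    then show "(sqrt l1 * r)\<^sup>2 + (sqrt l2 * s * r)\<^sup>2 = P" using D by simp
    fix p q :: real assume "p\<^sup>2 + q\<^sup>2 \<le> P"
    then show "min_gain (sqrt l1) (sqrt l2) s p q \<le> D * r"
      using min_gain_le_first[of p q P "sqrt l1" "sqrt l2" s] l1_pos l2_pos
      unfolding Dr by (simp add: D_def)
  qed (use assms s r l1_pos l2_pos in simp_all)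
  moreover have "(D * r / c)\<^sup>2 = P * D / c\<^sup>2"
    using assms(1) D by (simp add: Dr power_divide)
  ultimately show ?thesis unfolding D_def[symmetric] X Y by simp
qed

lemma is_max_second:
  assumes "P > 0" and "l2 / l1 < s" and "\<phi> - \<psi> = \<alpha>"
  shows "is_max P (of_real (sqrt (P * l1 / (l1 + l2 * (1 / s\<^sup>2)))) * cis \<phi>)
           (of_real (sqrt (P * l2 / (l1 * s\<^sup>2 + l2))) * cis \<psi>) (P * (l1 * s\<^sup>2 + l2) / c\<^sup>2)"
proof -
  define E where "E = l2 + l1 * s\<^sup>2"
  define r where "r = sqrt (P / E)"
  have E: "E > 0" using l1_pos l2_pos by (simp add: E_def add_pos_nonneg)
  have r: "r \<ge> 0" using E assms(1) by (simp add: r_def)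
  have "0 < l2 / l1" using l1_pos l2_pos by simp
  then have s: "0 < s" "s < 1" using assms(2) cos_sin_theta(4) by linarith+
  have "P * l1 / (l1 + l2 * (1 / s\<^sup>2)) = l1 * s\<^sup>2 * (P / E)"
    using s by (simp add: E_def field_simps)
  then have "sqrt (P * l1 / (l1 + l2 * (1 / s\<^sup>2))) = sqrt (l1 * s\<^sup>2 * (P / E))" by (rule arg_cong)
  also have "\<dots> = sqrt l1 * s * r" unfolding real_sqrt_mult r_def using s by simp
  finally have X: "sqrt (P * l1 / (l1 + l2 * (1 / s\<^sup>2))) = sqrt l1 * s * r" .
  have Y: "sqrt (P * l2 / (l1 * s\<^sup>2 + l2)) = sqrt l2 * r"
    by (simp add: r_def E_def real_sqrt_mult[symmetric] ac_simps)
  have Er: "E * r = sqrt (P * E)"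
    using E assms(1) by (simp add: r_def real_sqrt_divide real_sqrt_mult field_simps)
  have "is_max P (of_real (sqrt l1 * s * r) * cis \<phi>) (of_real (sqrt l2 * r) * cis \<psi>) ((E * r / c)\<^sup>2)"
  proof (rule is_max_aligned)
    have "min_gain (sqrt l2) (sqrt l1) s (sqrt l2 * r) (sqrt l1 * s * r)
        = ((sqrt l2)\<^sup>2 + (sqrt l1)\<^sup>2 * s\<^sup>2) * r"
      by (rule min_gain_first_witness)
         (use r s assms(2) l1_pos l2_pos in \<open>simp_all add: divide_less_eq mult.commute\<close>)
    then show "min_gain (sqrt l1) (sqrt l2) s (sqrt l1 * s * r) (sqrt l2 * r) = E * r"
      using l1_pos l2_pos by (simp add: E_def min_gain_swap[of "sqrt l1"])
    have "(sqrt l1 * s * r)\<^sup>2 + (sqrt l2 * r)\<^sup>2 = E * (P / E)"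
      using assms(1) l1_pos l2_pos by (simp add: r_def E_def power_mult_distrib algebra_simps add_divide_distrib)
    then show "(sqrt l1 * s * r)\<^sup>2 + (sqrt l2 * r)\<^sup>2 = P" using E by simp
    fix p q :: real assume "p\<^sup>2 + q\<^sup>2 \<le> P"
    then show "min_gain (sqrt l1) (sqrt l2) s p q \<le> E * r"
      using min_gain_le_first[of q p P "sqrt l2" "sqrt l1" s] l1_pos l2_pos
      unfolding Er by (simp add: E_def min_gain_swap[of "sqrt l1"] add.commute)
  qed (use assms s r l1_pos l2_pos in simp_all)
  moreover have "(E * r / c)\<^sup>2 = P * (l1 * s\<^sup>2 + l2) / c\<^sup>2"
    unfolding Er using assms(1) E by (simp add: power_divide E_def add.commute)
  ultimately show ?thesis unfolding X Y by simp
qed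

end

subsection \<open>Reduction to two coordinates\<close>

lemma mat_adjoint_carrier: "V \<in> carrier_mat n m \<Longrightarrow> mat_adjoint V \<in> carrier_mat m n"
  unfolding mat_adjoint_def mat_of_rows_def by auto

lemma mat_adjoint_index:
  "V \<in> carrier_mat n m \<Longrightarrow> i < m \<Longrightarrow> j < n \<Longrightarrow> mat_adjoint V $$ (i, j) = cnj (V $$ (j, i))"
  unfolding mat_adjoint_def mat_of_rows_def by auto

lemma mat_adjoint_mult_vec_index:
  assumes "V \<in> carrier_mat n n" and "h \<in> carrier_vec n" and "i < n"
  shows "(mat_adjoint V *\<^sub>v h) $ i = (\<Sum>j<n. cnj (V $$ (j, i)) * h $ j)"
  using assms mat_adjoint_carrier[OF assms(1)]
  by (auto simp: mult_mat_vec_def scalar_prod_def atLeast0LessThan mat_adjoint_index intro!: sum.cong)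

lemma hprod_mult_mat_vec:
  assumes V: "V \<in> carrier_mat n n" and h: "h \<in> carrier_vec n" and w: "w \<in> carrier_vec n"
  shows "hprod h (V *\<^sub>v w) = hprod (mat_adjoint V *\<^sub>v h) w"
proof -
  have "hprod h (V *\<^sub>v w) = (\<Sum>i<n. cnj (h $ i) * (\<Sum>j<n. V $$ (i, j) * w $ j))"
    using assms unfolding hprod_def by (auto simp: mult_mat_vec_def scalar_prod_def atLeast0LessThan)
  also have "\<dots> = (\<Sum>j<n. \<Sum>i<n. cnj (h $ i) * V $$ (i, j) * w $ j)"
    by (subst sum.swap) (simp add: sum_distrib_left mult.assoc)
  also have "\<dots> = (\<Sum>j<n. cnj (\<Sum>i<n. cnj (V $$ (i, j)) * h $ i) * w $ j)"
    by (simp add: sum_distrib_left sum_distrib_right mult_ac)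
  also have "\<dots> = hprod (mat_adjoint V *\<^sub>v h) w"
    using assms mat_adjoint_carrier[OF V] unfolding hprod_def
    by (auto simp: mult_mat_vec_def scalar_prod_def atLeast0LessThan mat_adjoint_index intro!: sum.cong)
  finally show ?thesis .
qed

lemma mat_adjoint_outer_diff_mult_index:
  assumes V: "V \<in> carrier_mat n n" and p: "p \<in> carrier_vec n" and q: "q \<in> carrier_vec n"
    and i: "i < n" and k: "k < n"
  shows "(mat_adjoint V * (outer p - outer q) * V) $$ (i, k)
       = (mat_adjoint V *\<^sub>v p) $ i * cnj ((mat_adjoint V *\<^sub>v p) $ k)
         - (mat_adjoint V *\<^sub>v q) $ i * cnj ((mat_adjoint V *\<^sub>v q) $ k)"
proof -
  have pq: "outer p - outer q \<in> carrier_mat n n" using p q unfolding outer_def by auto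
  have "(mat_adjoint V * (outer p - outer q) * V) $$ (i, k)
      = (\<Sum>j<n. cnj (V $$ (j, i)) * (\<Sum>l<n. (p $ j * cnj (p $ l) - q $ j * cnj (q $ l)) * V $$ (l, k)))"
    using assms pq mat_adjoint_carrier[OF V] unfolding outer_def
    by (auto simp: scalar_prod_def atLeast0LessThan mat_adjoint_index intro!: sum.cong)
  also have "\<dots> = (\<Sum>j<n. \<Sum>l<n. (cnj (V $$ (j, i)) * p $ j) * (V $$ (l, k) * cnj (p $ l))
        - (cnj (V $$ (j, i)) * q $ j) * (V $$ (l, k) * cnj (q $ l)))"
    by (simp add: sum_distrib_left algebra_simps)
  also have "\<dots> = (\<Sum>j<n. cnj (V $$ (j, i)) * p $ j) * (\<Sum>l<n. V $$ (l, k) * cnj (p $ l))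
       - (\<Sum>j<n. cnj (V $$ (j, i)) * q $ j) * (\<Sum>l<n. V $$ (l, k) * cnj (q $ l))"
    by (simp add: sum_subtractf sum_product)
  also have "\<dots> = (mat_adjoint V *\<^sub>v p) $ i * cnj ((mat_adjoint V *\<^sub>v p) $ k)
       - (mat_adjoint V *\<^sub>v q) $ i * cnj ((mat_adjoint V *\<^sub>v q) $ k)"
    using i k by (simp add: mat_adjoint_mult_vec_index[OF V p] mat_adjoint_mult_vec_index[OF V q] mult.commute)
  finally show ?thesis .
qed

lemma unitary_conjugate_cancel:
  assumes "unitary_mat n V" and "S \<in> carrier_mat n n"
  shows "mat_adjoint V * (V * S * mat_adjoint V) * V = S"
proof -
  have V: "V \<in> carrier_mat n n" and A: "mat_adjoint V \<in> carrier_mat n n"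
    and I: "mat_adjoint V * V = 1\<^sub>m n"
    using assms(1) mat_adjoint_carrier unfolding unitary_mat_def by auto
  have "mat_adjoint V * (V * S * mat_adjoint V) * V = (mat_adjoint V * V) * S * (mat_adjoint V * V)"
    using V A assms(2) by (simp add: assoc_mult_mat[of _ n n _ n _ n])
  then show ?thesis using I assms(2) by simp
qed

lemma unitary_mult_adjoint_vec:
  assumes "unitary_mat n V" and "u \<in> carrier_vec n"
  shows "V *\<^sub>v (mat_adjoint V *\<^sub>v u) = u" and "mat_adjoint V *\<^sub>v (V *\<^sub>v u) = u"
proof -
  have V: "V \<in> carrier_mat n n" and A: "mat_adjoint V \<in> carrier_mat n n"
    using assms(1) mat_adjoint_carrier unfolding unitary_mat_def by auto
  show "V *\<^sub>v (mat_adjoint V *\<^sub>v u) = u" "mat_adjoint V *\<^sub>v (V *\<^sub>v u) = u"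
    using assms assoc_mult_mat_vec[OF V A assms(2)] assoc_mult_mat_vec[OF A V assms(2)]
    unfolding unitary_mat_def by auto
qed

lemma hprod_unitary_mult:
  assumes "unitary_mat n V" and "g \<in> carrier_vec n"
  shows "hprod (V *\<^sub>v g) (V *\<^sub>v g) = hprod g g"
proof -
  have V: "V \<in> carrier_mat n n" using assms(1) unfolding unitary_mat_def by simp
  then show ?thesis
    using hprod_mult_mat_vec[OF V _ assms(2)] unitary_mult_adjoint_vec(2)[OF assms] assms(2) by simp
qed

locale eigen_pair =
  fixes M :: nat and h1 h2 :: "complex vec" and V :: "complex mat" and l1 l2 \<alpha> :: real
  assumes h1_carrier: "h1 \<in> carrier_vec M" and h2_carrier: "h2 \<in> carrier_vec M"
    and independent: "\<forall>a b :: complex. a \<cdot>\<^sub>v h1 + b \<cdot>\<^sub>v h2 = 0\<^sub>v M \<longrightarrow> a = 0 \<and> b = 0"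
    and unitary: "unitary_mat M V" and l1_pos: "l1 > 0" and l2_pos: "l2 > 0"
    and eigen: "outer h1 - outer h2 = V * Sigma_mat M l1 l2 * mat_adjoint V"
    and alpha: "(mat_adjoint V *\<^sub>v h2) $ 0 \<noteq> 0 \<Longrightarrow>
                \<alpha> = Arg ((mat_adjoint V *\<^sub>v h2) $ 0) - Arg ((mat_adjoint V *\<^sub>v h2) $ 1)"
begin

abbreviation "h1t \<equiv> mat_adjoint V *\<^sub>v h1"
abbreviation "h2t \<equiv> mat_adjoint V *\<^sub>v h2"

lemma V_carrier: "V \<in> carrier_mat M M" and adjoint_carrier: "mat_adjoint V \<in> carrier_mat M M"
  using unitary mat_adjoint_carrier unfolding unitary_mat_def by auto

lemma dim_ge_2: "M \<ge> 2"
proof (rule ccontr)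
  assume "\<not> M \<ge> 2"
  then have only_0: "i < M \<Longrightarrow> i = 0" for i by simp
  have "(h2 $ 0) \<cdot>\<^sub>v h1 + (- h1 $ 0) \<cdot>\<^sub>v h2 = 0\<^sub>v M"
    using h1_carrier h2_carrier by (intro eq_vecI) (auto dest: only_0)
  then have "- h1 $ 0 = 0" using independent by blast
  then have "h1 $ 0 = 0" by simp
  then have "1 \<cdot>\<^sub>v h1 + 0 \<cdot>\<^sub>v h2 = 0\<^sub>v M"
    using h1_carrier h2_carrier by (intro eq_vecI) (auto dest: only_0)
  then have "(1 :: complex) = 0" using independent by blast
  then show False by simp
qed

lemma eigen_entry:
  assumes "i < M" and "k < M"
  shows "h1t $ i * cnj (h1t $ k) - h2t $ i * cnj (h2t $ k) = Sigma_mat M l1 l2 $$ (i, k)"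
proof -
  have "mat_adjoint V * (outer h1 - outer h2) * V = Sigma_mat M l1 l2"
    unfolding eigen by (rule unitary_conjugate_cancel[OF unitary]) (simp add: Sigma_mat_def)
  then show ?thesis
    using mat_adjoint_outer_diff_mult_index[OF V_carrier h1_carrier h2_carrier assms] by simp
qed

sublocale R: diagonalised_pair "h1t $ 0" "h1t $ 1" "h2t $ 0" "h2t $ 1" l1 l2 \<alpha>
  using l1_pos l2_pos alpha eigen_entry[of 0 0] eigen_entry[of 1 1] eigen_entry[of 0 1] dim_ge_2
  by unfold_locales (auto simp: Sigma_mat_def)

lemma tail_zero:
  assumes "2 \<le> i" and "i < M"
  shows "h1t $ i = 0" and "h2t $ i = 0"
  using R.orthogonal_to_leading_block eigen_entry[of i 0] eigen_entry[of i 1] assms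
  by (auto simp: Sigma_mat_def)

lemma hprod_mult_V:
  assumes "h \<in> carrier_vec M" and "\<And>i. 2 \<le> i \<Longrightarrow> i < M \<Longrightarrow> (mat_adjoint V *\<^sub>v h) $ i = 0"
    and "g \<in> carrier_vec M"
  shows "hprod h (V *\<^sub>v g) = cnj ((mat_adjoint V *\<^sub>v h) $ 0) * g $ 0 + cnj ((mat_adjoint V *\<^sub>v h) $ 1) * g $ 1"
proof -
  have "hprod h (V *\<^sub>v g) = (\<Sum>i<M. cnj ((mat_adjoint V *\<^sub>v h) $ i) * g $ i)"
    using hprod_mult_mat_vec[OF V_carrier assms(1,3)] adjoint_carrier assms(1) by (simp add: hprod_def)
  also have "\<dots> = cnj ((mat_adjoint V *\<^sub>v h) $ 0) * g $ 0 + cnj ((mat_adjoint V *\<^sub>v h) $ 1) * g $ 1"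
    using dim_ge_2 assms(2) by (intro sum_lessThan_eq_first_two) auto
  finally show ?thesis .
qed

lemma fobj_mult_V: "g \<in> carrier_vec M \<Longrightarrow> fobj h1 h2 (V *\<^sub>v g) = R.F (g $ 0) (g $ 1)"
  unfolding fobj_def R.F_def
  using hprod_mult_V[OF h1_carrier tail_zero(1)] hprod_mult_V[OF h2_carrier tail_zero(2)] by simp

lemma max_attained_if_is_max:
  assumes "R.is_max P x y v"
  shows "max_attained M P h1 h2 (V *\<^sub>v vec2 M x y) v"
  unfolding max_attained_def
proof (intro conjI allI impI)
  have g: "vec2 M x y \<in> carrier_vec M" unfolding vec2_def by simp
  have "hprod (V *\<^sub>v vec2 M x y) (V *\<^sub>v vec2 M x y) = hprod (vec2 M x y) (vec2 M x y)"
    by (rule hprod_unitary_mult[OF unitary g])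
  also have "\<dots> = of_real ((cmod x)\<^sup>2 + (cmod y)\<^sup>2)"
    unfolding hprod_self_eq_sum using dim_ge_2
    by (subst sum_lessThan_eq_first_two) (auto simp: vec2_def)
  finally show "feasible M P (V *\<^sub>v vec2 M x y)"
    using assms V_carrier g unfolding feasible_def R.is_max_def by simp
  show "fobj h1 h2 (V *\<^sub>v vec2 M x y) = v"
    using assms fobj_mult_V[OF g] dim_ge_2 unfolding R.is_max_def by (simp add: vec2_def)
  fix u assume u: "feasible M P u"
  define g where "g = mat_adjoint V *\<^sub>v u"
  have gc: "g \<in> carrier_vec M" and ug: "u = V *\<^sub>v g"
    using u adjoint_carrier unitary_mult_adjoint_vec(1)[OF unitary] unfolding g_def feasible_def by auto
  have "(cmod (g $ 0))\<^sup>2 + (cmod (g $ 1))\<^sup>2 \<le> (\<Sum>i<M. (cmod (g $ i))\<^sup>2)"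
    using dim_ge_2 sum_mono2[of "{..<M}" "{0, 1}" "\<lambda>i. (cmod (g $ i))\<^sup>2"] by simp
  also have "\<dots> = (vnorm u)\<^sup>2"
    unfolding ug vnorm_def hprod_unitary_mult[OF unitary gc] using gc by (simp add: vnorm_square[unfolded vnorm_def])
  finally show "fobj h1 h2 u \<le> v"
    using assms fobj_mult_V[OF gc] feasible_vnorm[OF u] ug unfolding R.is_max_def by simp
qed

end

theorem theorem3:
  fixes M :: nat and h1 h2 :: "complex vec" and P :: real
  assumes h1_dim: "h1 \<in> carrier_vec M" and h2_dim: "h2 \<in> carrier_vec M"
    and h1_nz: "h1 \<noteq> 0\<^sub>v M" and h2_nz: "h2 \<noteq> 0\<^sub>v M"
    and P_pos: "P > 0"
  shows
    "((\<exists>\<tau>::complex. h1 = \<tau> \<cdot>\<^sub>v h2) \<longrightarrow>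
       max_attained M P h1 h2
         (complex_of_real (sqrt P / vnorm h2) \<cdot>\<^sub>v h2)
         (min (P * (vnorm h1)\<^sup>2) (P * (vnorm h2)\<^sup>2))
     \<and> max_attained M P h1 h2
         (complex_of_real (sqrt P / vnorm h1) \<cdot>\<^sub>v h1)
         (min (P * (vnorm h1)\<^sup>2) (P * (vnorm h2)\<^sup>2)))
   \<and>
    (\<forall>(V :: complex mat) (l1 :: real) (l2 :: real) (\<alpha> :: real).
       (\<forall>a b :: complex. a \<cdot>\<^sub>v h1 + b \<cdot>\<^sub>v h2 = 0\<^sub>v M \<longrightarrow> a = 0 \<and> b = 0)
       \<and> unitary_mat M V \<and> l1 > 0 \<and> l2 > 0
       \<and> outer h1 - outer h2 = V * Sigma_mat M l1 l2 * mat_adjoint V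
       \<and> (let t21 = (mat_adjoint V *\<^sub>v h2) $ 0; t22 = (mat_adjoint V *\<^sub>v h2) $ 1
          in t21 \<noteq> 0 \<longrightarrow> \<alpha> = Arg t21 - Arg t22)
     \<longrightarrow>
       (let t1 = mat_adjoint V *\<^sub>v h1; t2 = mat_adjoint V *\<^sub>v h2;
            \<theta> = arccos (sqrt l1 / cmod (t1 $ 0));
            \<beta> = Arg (t1 $ 0); \<gamma> = Arg (t2 $ 1);
            s = sin \<theta>; c = cos \<theta>;
            e = (\<lambda>x::real. cis x)
        in
        (l1 \<le> l2 \<and> 0 \<le> s \<and> s \<le> l1 / l2 \<longrightarrow>
           max_attained M P h1 h2
             (V *\<^sub>v vec2 M (complex_of_real (sqrt (P * l2 / (l1 + l2))) * e \<beta>)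
                             (complex_of_real (sqrt (P * l1 / (l1 + l2))) * e (\<beta> - \<alpha>)))
             (P * l1 * l2 / (l1 + l2) * (1 + s)\<^sup>2 / c\<^sup>2))
      \<and> (l1 \<le> l2 \<and> l1 / l2 < s \<and> s < 1 \<longrightarrow>
           max_attained M P h1 h2
             (V *\<^sub>v vec2 M (complex_of_real (sqrt (P * l1 / (l1 + l2 * s\<^sup>2))) * e \<beta>)
                             (complex_of_real (sqrt (P * l2 * s\<^sup>2 / (l1 + l2 * s\<^sup>2))) * e (\<beta> - \<alpha>)))
             (P * (l1 + l2 * s\<^sup>2) / c\<^sup>2))
      \<and> (l1 > l2 \<and> 0 \<le> s \<and> s \<le> l2 / l1 \<longrightarrow>
           max_attained M P h1 h2
             (V *\<^sub>v vec2 M (complex_of_real (sqrt (P * l2 / (l1 + l2))) * e (\<gamma> + \<alpha>))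
                             (complex_of_real (sqrt (P * l1 / (l1 + l2))) * e \<gamma>))
             (P * l1 * l2 / (l1 + l2) * (1 + s)\<^sup>2 / c\<^sup>2))
      \<and> (l1 > l2 \<and> l2 / l1 < s \<and> s < 1 \<longrightarrow>
           max_attained M P h1 h2
             (V *\<^sub>v vec2 M (complex_of_real (sqrt (P * l1 / (l1 + l2 * (1 / s\<^sup>2)))) * e (\<gamma> + \<alpha>))
                             (complex_of_real (sqrt (P * l2 / (l1 * s\<^sup>2 + l2))) * e \<gamma>))
             (P * (l1 * s\<^sup>2 + l2) / c\<^sup>2))))"
  apply (intro conjI impI allI)
  subgoal using max_attained_parallel(1)[OF h1_dim h2_dim h1_nz h2_nz P_pos] by blast
  subgoal using max_attained_parallel(2)[OF h1_dim h2_dim h1_nz h2_nz P_pos] by blast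
  subgoal premises hyp for V l1 l2 \<alpha>
  proof -
    interpret eigen_pair M h1 h2 V l1 l2 \<alpha>
      using h1_dim h2_dim hyp by unfold_locales (auto simp: Let_def)
    show ?thesis
      unfolding Let_def R.s_def[symmetric] R.c_def[symmetric]
      apply (intro conjI impI; elim conjE; rule max_attained_if_is_max)
         apply (rule R.is_max_balanced; use P_pos R.s_le_ratio in simp)
        apply (rule R.is_max_first; use P_pos in simp)
       apply (rule R.is_max_balanced; use P_pos R.s_le_ratio in simp)
      apply (rule R.is_max_second; use P_pos in simp)
      done
  qed
  done

end
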